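(* Let $(\mathcal G,\alpha)$ be a matching model such that $\alpha$ satisfies the stability condition $|\alpha_{\mathcal I}|<|\alpha_{\mathcal E(\mathcal I)}|$ for all $\mathcal I\in\mathbb I$. Then the stationary mean number of items under FCFS equals $$\mathbb E[Q]=\Big(1+\sum_{\mathcal I\in\mathbb I}T_{\mathcal I}\Big)^{-1}\Big(\sum_{\mathcal I\in\mathbb I}E_{\mathcal I}\Big).$$
   Context: A matching model consists of a finite connected simple graph $\mathcal G=(\mathcal V,\xi)$ (the compatibility graph), $\mathcal V=\{1,\dots,n\}$, and a probability distribution $\alpha=(\alpha_1,\dots,\alpha_n)$ on $\mathcal V$ with all $\alpha_i>0$. In each time step an item of class $i$ arrives with probability proportional to $\alpha_i$. For $i\in\mathcal V$ let $\mathcal E(i)$ be the set of neighbours of $i$; for $V\subseteq\mathcal V$ let $\mathcal E(V)=\bigcup_{i\in V}\mathcal E(i)$ and $|\alpha_V|=\sum_{i\in V}\alpha_i$. The state is a finite word $w=w_1\cdots w_q$ over $\mathcal V$ with no two letters adjacent in $\mathcal G$ (unmatched items in order of arrival). Under FCFS, if an item of class $i$ arrives in state $w$ and some letter of $w$ lies in $\mathcal E(i)$, the first such letter is deleted; otherwise $i$ is appended. An independent set is a non-empty subset of $\mathcal V$ with no two elements adjacent; $\mathbb I$ is the set of independent sets. Under the stability condition the chain is positive recurrent with stationary distribution $\pi(w)=\pi_0\prod_{i=1}^q\alpha_{w_i}/|\alpha_{\mathcal E(\{w_1,\dots,w_i\})}|$, and $\mathbb E[Q]=\sum_w |w|\pi(w)$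 where $|w|$ is the length of $w$. For $\mathcal I\in\mathbb I$ and an ordering $(i_1,\dots,i_m)$ of its elements ($m=|\mathcal I|$), write $\mathcal I_k=\{i_1,\dots,i_k\}$ and $$T_{(i_1,\dots,i_m)}=\prod_{k=1}^m\frac{\alpha_{i_k}}{|\alpha_{\mathcal E(\mathcal I_k)}|-|\alpha_{\mathcal I_k}|},\qquad E_{(i_1,\dots,i_m)}=\sum_{l=1}^m\frac{|\alpha_{\mathcal E(\mathcal I_l)}|}{|\alpha_{\mathcal E(\mathcal I_l)}|-|\alpha_{\mathcal I_l}|}\,T_{(i_1,\dots,i_m)}.$$ $T_{\mathcal I}$ (resp. $E_{\mathcal I}$) is the sum of $T_{(i_1,\dots,i_m)}$ (resp. $E_{(i_1,\dots,i_m)}$) over all $m!$ orderings of $\mathcal I$. *)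

theory Defs
  imports "HOL-Analysis.Analysis" "HOL-Combinatorics.Multiset_Permutations"
begin

definition simple_graph_on :: "nat set \<Rightarrow> (nat \<Rightarrow> nat \<Rightarrow> bool) \<Rightarrow> bool" where
  "simple_graph_on V Ed \<longleftrightarrow> (\<forall>i j. Ed i j \<longrightarrow> i \<in> V \<and> j \<in> V)
     \<and> (\<forall>i j. Ed i j \<longrightarrow> Ed j i) \<and> (\<forall>i. \<not> Ed i i)"

definition graph_connected :: "nat set \<Rightarrow> (nat \<Rightarrow> nat \<Rightarrow> bool) \<Rightarrow> bool" where
  "graph_connected V Ed \<longleftrightarrow> (\<forall>i\<in>V. \<forall>j\<in>V. Ed\<^sup>*\<^sup>* i j)"

definition nbrs :: "(nat \<Rightarrow> nat \<Rightarrow> bool) \<Rightarrow> nat set \<Rightarrow> nat set" where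
  "nbrs Ed S = {j. \<exists>i\<in>S. Ed i j}"

definition asum :: "(nat \<Rightarrow> real) \<Rightarrow> nat set \<Rightarrow> real" where
  "asum \<alpha> S = (\<Sum>i\<in>S. \<alpha> i)"

definition indep_sets :: "nat set \<Rightarrow> (nat \<Rightarrow> nat \<Rightarrow> bool) \<Rightarrow> nat set set" where
  "indep_sets V Ed = {I. I \<subseteq> V \<and> I \<noteq> {} \<and> (\<forall>i\<in>I. \<forall>j\<in>I. \<not> Ed i j)}"

definition states :: "nat set \<Rightarrow> (nat \<Rightarrow> nat \<Rightarrow> bool) \<Rightarrow> nat list set" where
  "states V Ed = {w. set w \<subseteq> V \<and> (\<forall>a\<in>set w. \<forall>b\<in>set w. \<not> Ed a b)}"

definition pweight :: "(nat \<Rightarrow> nat \<Rightarrow> bool) \<Rightarrow> (nat \<Rightarrow> real) \<Rightarrow> nat list \<Rightarrow> real" where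
  "pweight Ed \<alpha> w = (\<Prod>k<length w. \<alpha> (w ! k) / asum \<alpha> (nbrs Ed (set (take (Suc k) w))))"

definition stat_pi :: "nat set \<Rightarrow> (nat \<Rightarrow> nat \<Rightarrow> bool) \<Rightarrow> (nat \<Rightarrow> real) \<Rightarrow> nat list \<Rightarrow> real" where
  "stat_pi V Ed \<alpha> w = inverse (\<Sum>\<^sub>\<infinity>u\<in>states V Ed. pweight Ed \<alpha> u) * pweight Ed \<alpha> w"

definition T_ord :: "(nat \<Rightarrow> nat \<Rightarrow> bool) \<Rightarrow> (nat \<Rightarrow> real) \<Rightarrow> nat list \<Rightarrow> real" where
  "T_ord Ed \<alpha> xs = (\<Prod>k<length xs. \<alpha> (xs ! k) /
      (asum \<alpha> (nbrs Ed (set (take (Suc k) xs))) - asum \<alpha> (set (take (Suc k) xs))))"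

definition E_ord :: "(nat \<Rightarrow> nat \<Rightarrow> bool) \<Rightarrow> (nat \<Rightarrow> real) \<Rightarrow> nat list \<Rightarrow> real" where
  "E_ord Ed \<alpha> xs = (\<Sum>l<length xs. asum \<alpha> (nbrs Ed (set (take (Suc l) xs))) /
      (asum \<alpha> (nbrs Ed (set (take (Suc l) xs))) - asum \<alpha> (set (take (Suc l) xs)))) * T_ord Ed \<alpha> xs"

definition T_set :: "(nat \<Rightarrow> nat \<Rightarrow> bool) \<Rightarrow> (nat \<Rightarrow> real) \<Rightarrow> nat set \<Rightarrow> real" where
  "T_set Ed \<alpha> I = (\<Sum>xs\<in>permutations_of_set I. T_ord Ed \<alpha> xs)"

definition E_set :: "(nat \<Rightarrow> nat \<Rightarrow> bool) \<Rightarrow> (nat \<Rightarrow> real) \<Rightarrow> nat set \<Rightarrow> real" where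
  "E_set Ed \<alpha> I = (\<Sum>xs\<in>permutations_of_set I. E_ord Ed \<alpha> xs)"

end

theory Submission
  imports Defs
begin

(* Group the states by the order i_1, ..., i_m in which their letters first occur. Such a word
   is i_1 u_1 i_2 u_2 ... i_m u_m with u_k an arbitrary word over I_k = {i_1, ..., i_k}, and every
   letter x of i_k u_k contributes the factor alpha_x / |alpha_E(I_k)| to the stationary weight.
   Summing over u_k is thus a geometric series with ratio |alpha_I_k| / |alpha_E(I_k)|, which
   converges by stability, so the weights of a class add up to T of the ordering; the series
   of lengths times ratio powers turns the length-weighted total into E.  Summing over
   orderings, independent sets and the empty word yields the normalising constant
   1 + sum T_I and the unnormalised mean sum E_I. *)

lemma has_sum_product_nonneg:
  fixes f g :: "_ \<Rightarrow> real"
  assumes "(f has_sum F) A" "(g has_sum G) B"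
    and "\<And>x. x \<in> A \<Longrightarrow> 0 \<le> f x" "\<And>y. y \<in> B \<Longrightarrow> 0 \<le> g y"
  shows "((\<lambda>(x, y). f x * g y) has_sum (F * G)) (A \<times> B)"
proof -
  have inner: "((\<lambda>y. f x * g y) has_sum f x * G) B" for x
    using has_sum_cmult_right[OF assms(2)] .
  have outer: "((\<lambda>x. f x * G) has_sum F * G) A"
    using has_sum_cmult_left[OF assms(1)] .
  have "(\<lambda>(x, y). f x * g y) summable_on A \<times> B"
    using inner outer has_sum_imp_summable assms(3,4)
    by (intro summable_on_SigmaI[where g = "\<lambda>x. f x * G"]) auto
  then show ?thesis
    using has_sum_SigmaI[where f = "\<lambda>(x, y). f x * g y", OF _ outer] inner by simp
qed

lemma sum_prod_list_lists_length:
  fixes c :: "'a \<Rightarrow> real"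
  assumes "finite S"
  shows "(\<Sum>u\<in>{u. set u \<subseteq> S \<and> length u = k}. prod_list (map c u)) = sum c S ^ k"
proof (induction k)
  case 0
  have "{u. set u \<subseteq> S \<and> length u = 0} = {[]}" by auto
  then show ?case by simp
next
  case (Suc k)
  let ?L = "{u. set u \<subseteq> S \<and> length u = k}"
  have eq: "{u. set u \<subseteq> S \<and> length u = Suc k} = (\<lambda>(a, u). a # u) ` (S \<times> ?L)"
    by (auto simp: length_Suc_conv image_iff)
  have inj: "inj_on (\<lambda>(a, u). a # u) (S \<times> ?L)"
    by (auto simp: inj_on_def)
  have "(\<Sum>u\<in>{u. set u \<subseteq> S \<and> length u = Suc k}. prod_list (map c u))
      = (\<Sum>(a, u)\<in>S \<times> ?L. c a * prod_list (map c u))"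
    unfolding eq by (subst sum.reindex[OF inj]) (simp add: case_prod_unfold)
  also have "\<dots> = sum c S * (\<Sum>u\<in>?L. prod_list (map c u))"
    by (simp add: sum_product sum.cartesian_product)
  finally show ?case using Suc by simp
qed

lemma has_sum_lists_by_length:
  fixes f :: "'a list \<Rightarrow> real"
  assumes "finite S" and "\<And>u. u \<in> lists S \<Longrightarrow> 0 \<le> f u"
    and "\<And>k. (\<Sum>u\<in>{u. set u \<subseteq> S \<and> length u = k}. f u) = g k"
    and "(g has_sum s) UNIV"
  shows "(f has_sum s) (lists S)"
proof -
  define L where "L k = {u. set u \<subseteq> S \<and> length u = k}" for k
  have inner: "((\<lambda>u. (\<lambda>(k, u). f u) (k, u)) has_sum g k) (L k)" for k
    using assms(3) finite_lists_length_eq[OF assms(1)] by (intro has_sum_finiteI) (simp_all add: L_def)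
  have reindex: "(f has_sum s) (lists S) \<longleftrightarrow> ((\<lambda>(k, u). f u) has_sum s) (Sigma UNIV L)"
    by (rule has_sum_reindex_bij_witness[where j = "\<lambda>u. (length u, u)" and i = snd])
       (auto simp: L_def)
  have nonneg: "0 \<le> f u" if "u \<in> L k" for k u
    using that assms(2) by (simp add: L_def in_lists_conv_set subset_iff)
  show ?thesis
    unfolding reindex
    using assms(4) has_sum_imp_summable nonneg
    by (intro has_sum_SigmaI[OF inner assms(4)] summable_on_SigmaI[OF inner]) auto
qed

lemma has_sum_of_nat_mult_power:
  fixes r :: real
  assumes "0 \<le> r" "r < 1"
  shows "((\<lambda>k. real k * r ^ k) has_sum r / (1 - r)^2) UNIV"
proof (rule sums_nonneg_imp_has_sum)
  have "(\<lambda>k. real (Suc k) * r ^ k - r ^ k) sums (1 / (1 - r)^2 - 1 / (1 - r))"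
    using sums_diff[OF geometric_deriv_sums[of r] geometric_sums[of r]] assms by simp
  moreover have "1 / (1 - r)^2 - 1 / (1 - r) = r / (1 - r)^2"
  proof -
    have "1 / d^2 - 1 / d = (1 - d) / d^2" if "0 < d" for d :: real
      using that by (simp add: field_simps power2_eq_square)
    then show ?thesis
      using assms by simp
  qed
  ultimately show "(\<lambda>k. real k * r ^ k) sums (r / (1 - r)^2)"
    by (simp add: algebra_simps)
qed (use assms in simp)

lemma
  fixes c :: "'a \<Rightarrow> real"
  assumes "finite S" and "\<And>x. x \<in> S \<Longrightarrow> 0 \<le> c x" and "sum c S < 1"
  shows has_sum_prod_list_lists: "((\<lambda>u. prod_list (map c u)) has_sum 1 / (1 - sum c S)) (lists S)"
    and has_sum_length_prod_list_lists:
      "((\<lambda>u. real (length u) * prod_list (map c u)) has_sum sum c S / (1 - sum c S)^2) (lists S)"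
proof -
  have r: "0 \<le> sum c S" using assms(2) by (simp add: sum_nonneg)
  have nonneg: "0 \<le> prod_list (map c u)" if "u \<in> lists S" for u
    using that assms(2) by (induction u) auto
  show "((\<lambda>u. prod_list (map c u)) has_sum 1 / (1 - sum c S)) (lists S)"
  proof (rule has_sum_lists_by_length[OF assms(1) nonneg])
    show "(\<Sum>u\<in>{u. set u \<subseteq> S \<and> length u = k}. prod_list (map c u)) = sum c S ^ k" for k
      by (rule sum_prod_list_lists_length[OF assms(1)])
    show "((\<lambda>k. sum c S ^ k) has_sum 1 / (1 - sum c S)) UNIV"
      using geometric_sums[of "sum c S"] r assms(3) by (intro sums_nonneg_imp_has_sum) auto
  qed
  show "((\<lambda>u. real (length u) * prod_list (map c u)) has_sum sum c S / (1 - sum c S)^2) (lists S)"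
  proof (rule has_sum_lists_by_length[OF assms(1)])
    show "(\<Sum>u\<in>{u. set u \<subseteq> S \<and> length u = k}. real (length u) * prod_list (map c u)) =
        real k * sum c S ^ k" for k
      using sum_prod_list_lists_length[OF assms(1), of c k] by (simp add: sum_distrib_left[symmetric])
    show "((\<lambda>k. real k * sum c S ^ k) has_sum sum c S / (1 - sum c S)^2) UNIV"
      using has_sum_of_nat_mult_power r assms(3) .
  qed (use nonneg in simp)
qed

lemma
  fixes \<alpha> :: "'a \<Rightarrow> real"
  assumes "finite S" and "\<And>x. x \<in> S \<Longrightarrow> 0 \<le> \<alpha> x" and "sum \<alpha> S < A"
  shows has_sum_prod_list_Cons_lists:
      "((\<lambda>u. prod_list (map (\<lambda>x. \<alpha> x / A) (i # u))) has_sum \<alpha> i / (A - sum \<alpha> S)) (lists S)"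
    and has_sum_length_prod_list_Cons_lists:
      "((\<lambda>u. real (length (i # u)) * prod_list (map (\<lambda>x. \<alpha> x / A) (i # u)))
         has_sum \<alpha> i * A / (A - sum \<alpha> S)^2) (lists S)"
proof -
  define c where "c x = \<alpha> x / A" for x
  have A: "0 < A" using assms(3) sum_nonneg[of S \<alpha>] assms(2) by fastforce
  have sum_c: "sum c S = sum \<alpha> S / A"
    by (simp add: c_def sum_divide_distrib)
  have c: "\<And>x. x \<in> S \<Longrightarrow> 0 \<le> c x" "sum c S < 1"
    using assms A by (simp_all only: sum_c) (simp_all add: c_def)
  note geom = has_sum_prod_list_lists[OF assms(1) c] has_sum_length_prod_list_lists[OF assms(1) c]
  define d where "d = A - sum \<alpha> S"
  have d: "0 < d"
    using assms(3) by (simp add: d_def)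
  have one_minus: "1 - sum c S = d / A"
    unfolding sum_c d_def using A by (simp add: field_simps)
  have "c i / (1 - sum c S) = \<alpha> i / (A - sum \<alpha> S)"
    unfolding one_minus d_def[symmetric] using d A by (simp add: c_def field_simps)
  then show "((\<lambda>u. prod_list (map (\<lambda>x. \<alpha> x / A) (i # u))) has_sum \<alpha> i / (A - sum \<alpha> S)) (lists S)"
    using has_sum_cmult_right[OF geom(1), of "c i"] by (simp add: c_def[symmetric])
  have "c i * (1 / (1 - sum c S)) + c i * (sum c S / (1 - sum c S)^2) = \<alpha> i * A / (A - sum \<alpha> S)^2"
    unfolding one_minus d_def[symmetric] unfolding sum_c
    using d A by (simp add: c_def field_simps power2_eq_square) (simp add: d_def algebra_simps)
  then show "((\<lambda>u. real (length (i # u)) * prod_list (map (\<lambda>x. \<alpha> x / A) (i # u)))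
      has_sum \<alpha> i * A / (A - sum \<alpha> S)^2) (lists S)"
    using has_sum_add[OF has_sum_cmult_right[OF geom(1)] has_sum_cmult_right[OF geom(2)], of "c i" "c i"]
    by (simp add: c_def[symmetric] algebra_simps)
qed

definition first_occurrences :: "'a list \<Rightarrow> 'a list" where
  "first_occurrences w = rev (remdups (rev w))"

lemma first_occurrences_Nil [simp]: "first_occurrences [] = []"
  by (simp add: first_occurrences_def)

lemma first_occurrences_snoc:
  "first_occurrences (w @ [c]) = (if c \<in> set w then first_occurrences w else first_occurrences w @ [c])"
  by (simp add: first_occurrences_def)

lemma first_occurrences_eq_Nil_iff [simp]: "first_occurrences w = [] \<longleftrightarrow> w = []"
  by (simp add: first_occurrences_def)

lemma set_first_occurrences [simp]: "set (first_occurrences w) = set w"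
  by (simp add: first_occurrences_def)

lemma distinct_first_occurrences [simp]: "distinct (first_occurrences w)"
  by (simp add: first_occurrences_def)

lemma first_occurrences_append:
  "first_occurrences (p @ q) = first_occurrences p @ first_occurrences (filter (\<lambda>x. x \<notin> set p) q)"
proof (induction q rule: rev_induct)
  case (snoc c q)
  then show ?case
    by (simp flip: append_assoc add: first_occurrences_snoc)
qed simp

lemma takeWhile_neq_append_Cons: "i \<notin> set p \<Longrightarrow> takeWhile (\<lambda>x. x \<noteq> i) (p @ i # u) = p"
  by (induction p) auto

lemma inj_on_append_Cons:
  "inj_on (\<lambda>(p, u). p @ i # u) {(p, u). i \<notin> set p}"
proof (rule inj_onI, clarsimp)
  fix p u p' u'
  assume "i \<notin> set p" "i \<notin> set p'" and eq: "p @ i # u = p' @ i # u'"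
  then have "p = p'" using takeWhile_neq_append_Cons by metis
  with eq show "p = p' \<and> u = u'" by simp
qed

lemma first_occurrences_snoc_fibre:
  assumes "i \<notin> set xs"
  shows "{w. first_occurrences w = xs @ [i]} =
    (\<lambda>(p, u). p @ i # u) ` ({p. first_occurrences p = xs} \<times> lists (insert i (set xs)))"
proof (intro set_eqI iffI)
  fix w assume "w \<in> {w. first_occurrences w = xs @ [i]}"
  then have w: "first_occurrences w = xs @ [i]" by simp
  then have "i \<in> set w" by (metis set_first_occurrences in_set_conv_decomp)
  then obtain p u where wpu: "w = p @ i # u" and i: "i \<notin> set p"
    using split_list_first by metis
  define Y where "Y = first_occurrences (filter (\<lambda>x. x \<notin> set (p @ [i])) u)"
  have "xs @ i # [] = first_occurrences p @ i # Y"
    using w i first_occurrences_append[of "p @ [i]" u] by (simp add: wpu Y_def first_occurrences_snoc)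
  then have "first_occurrences p = xs" "Y = []"
    using append_Cons_eq_iff[of i xs "[]"] assms by auto
  moreover from this have "u \<in> lists (insert i (set xs))"
    by (auto simp: Y_def filter_empty_conv)
  ultimately show "w \<in> (\<lambda>(p, u). p @ i # u) ` ({p. first_occurrences p = xs} \<times> lists (insert i (set xs)))"
    unfolding wpu by (intro image_eqI[where x = "(p, u)"]) auto
next
  fix w assume "w \<in> (\<lambda>(p, u). p @ i # u) ` ({p. first_occurrences p = xs} \<times> lists (insert i (set xs)))"
  then obtain p u where "w = p @ i # u" "first_occurrences p = xs" "set u \<subseteq> insert i (set xs)"
    by auto
  then show "w \<in> {w. first_occurrences w = xs @ [i]}"
    using assms first_occurrences_append[of "p @ [i]" u]
    by (auto simp: first_occurrences_snoc filter_empty_conv)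
qed

fun pweight_from :: "(nat \<Rightarrow> nat \<Rightarrow> bool) \<Rightarrow> (nat \<Rightarrow> real) \<Rightarrow> nat set \<Rightarrow> nat list \<Rightarrow> real" where
  "pweight_from Ed \<alpha> S [] = 1"
| "pweight_from Ed \<alpha> S (a # q) =
     \<alpha> a / asum \<alpha> (nbrs Ed (insert a S)) * pweight_from Ed \<alpha> (insert a S) q"

lemma prod_eq_pweight_from:
  "(\<Prod>k<length q. \<alpha> (q ! k) / asum \<alpha> (nbrs Ed (S \<union> set (take (Suc k) q)))) = pweight_from Ed \<alpha> S q"
proof (induction q arbitrary: S)
  case (Cons a q)
  have "(\<Prod>k<length (a # q). \<alpha> ((a # q) ! k) / asum \<alpha> (nbrs Ed (S \<union> set (take (Suc k) (a # q))))) =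
      \<alpha> a / asum \<alpha> (nbrs Ed (insert a S)) *
      (\<Prod>k<length q. \<alpha> (q ! k) / asum \<alpha> (nbrs Ed (insert a S \<union> set (take (Suc k) q))))"
    by (simp add: prod.lessThan_Suc_shift del: prod.lessThan_Suc)
  then show ?case
    using Cons.IH[of "insert a S"] by simp
qed simp

lemma pweight_eq_pweight_from: "pweight Ed \<alpha> w = pweight_from Ed \<alpha> {} w"
  unfolding pweight_def using prod_eq_pweight_from[where S = "{}"] by simp

lemma pweight_from_append:
  "pweight_from Ed \<alpha> S (p @ q) = pweight_from Ed \<alpha> S p * pweight_from Ed \<alpha> (S \<union> set p) q"
  by (induction p arbitrary: S) auto

lemma pweight_from_subset:
  "set u \<subseteq> S \<Longrightarrow> pweight_from Ed \<alpha> S u = prod_list (map (\<lambda>x. \<alpha> x / asum \<alpha> (nbrs Ed S)) u)"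
  by (induction u) (auto simp: insert_absorb)

lemma pweight_append_Cons:
  assumes "set u \<subseteq> insert i (set p)"
  shows "pweight Ed \<alpha> (p @ i # u) =
    pweight Ed \<alpha> p * prod_list (map (\<lambda>x. \<alpha> x / asum \<alpha> (nbrs Ed (insert i (set p)))) (i # u))"
  using assms by (simp add: pweight_eq_pweight_from pweight_from_append pweight_from_subset)

lemma pweight_nonneg:
  assumes "\<And>x. x \<in> set w \<Longrightarrow> 0 \<le> \<alpha> x"
    and "\<And>T. T \<subseteq> set w \<Longrightarrow> T \<noteq> {} \<Longrightarrow> 0 \<le> asum \<alpha> (nbrs Ed T)"
  shows "0 \<le> pweight Ed \<alpha> w"
  unfolding pweight_def
proof (intro prod_nonneg divide_nonneg_nonneg ballI)
  fix k assume k: "k \<in> {..<length w}"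
  then show "0 \<le> \<alpha> (w ! k)"
    using assms(1) by simp
  have "set (take (Suc k) w) \<subseteq> set w" "set (take (Suc k) w) \<noteq> {}"
    using k by (auto simp: set_take_subset)
  then show "0 \<le> asum \<alpha> (nbrs Ed (set (take (Suc k) w)))"
    by (rule assms(2))
qed

lemma prod_prefixes_snoc:
  "(\<Prod>k<length (xs @ [i]). f ((xs @ [i]) ! k) (set (take (Suc k) (xs @ [i])))) =
     (\<Prod>k<length xs. f (xs ! k) (set (take (Suc k) xs))) * f i (insert i (set xs))"
  by (auto simp: nth_append intro!: prod.cong)

lemma sum_prefixes_snoc:
  "(\<Sum>k<length (xs @ [i]). f (set (take (Suc k) (xs @ [i])))) =
     (\<Sum>k<length xs. f (set (take (Suc k) xs))) + f (insert i (set xs))"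
  by (auto intro!: sum.cong)

lemma T_ord_snoc:
  "T_ord Ed \<alpha> (xs @ [i]) = T_ord Ed \<alpha> xs *
     (\<alpha> i / (asum \<alpha> (nbrs Ed (insert i (set xs))) - asum \<alpha> (insert i (set xs))))"
  unfolding T_ord_def
  by (rule prod_prefixes_snoc[where f = "\<lambda>x S. \<alpha> x / (asum \<alpha> (nbrs Ed S) - asum \<alpha> S)"])

lemma E_ord_snoc:
  fixes Ed :: "nat \<Rightarrow> nat \<Rightarrow> bool" and \<alpha> :: "nat \<Rightarrow> real" and i :: nat and xs :: "nat list"
  defines "A \<equiv> asum \<alpha> (nbrs Ed (insert i (set xs)))" and "B \<equiv> asum \<alpha> (insert i (set xs))"
  shows "E_ord Ed \<alpha> (xs @ [i]) = (E_ord Ed \<alpha> xs + T_ord Ed \<alpha> xs * (A / (A - B))) * (\<alpha> i / (A - B))"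
proof -
  define e where "e ys = (\<Sum>l<length ys. asum \<alpha> (nbrs Ed (set (take (Suc l) ys))) /
      (asum \<alpha> (nbrs Ed (set (take (Suc l) ys))) - asum \<alpha> (set (take (Suc l) ys))))" for ys
  have e_snoc: "e (xs @ [i]) = e xs + A / (A - B)"
    unfolding e_def A_def B_def
    by (rule sum_prefixes_snoc[where f = "\<lambda>S. asum \<alpha> (nbrs Ed S) / (asum \<alpha> (nbrs Ed S) - asum \<alpha> S)"])
  have E_eq: "E_ord Ed \<alpha> ys = e ys * T_ord Ed \<alpha> ys" for ys
    unfolding E_ord_def e_def ..
  have rearrange: "(x + c) * (t * a) = (x * t + t * c) * a" for x c t a :: real
    by (simp add: algebra_simps)
  have "E_ord Ed \<alpha> (xs @ [i]) = (e xs + A / (A - B)) * (T_ord Ed \<alpha> xs * (\<alpha> i / (A - B)))"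
    by (simp only: E_eq e_snoc T_ord_snoc[of Ed \<alpha> xs i, folded A_def B_def])
  also have "\<dots> = (E_ord Ed \<alpha> xs + T_ord Ed \<alpha> xs * (A / (A - B))) * (\<alpha> i / (A - B))"
    by (simp only: rearrange E_eq[of xs])
  finally show ?thesis .
qed

lemma has_sum_first_occurrences_snoc:
  fixes Ed :: "nat \<Rightarrow> nat \<Rightarrow> bool" and \<alpha> :: "nat \<Rightarrow> real" and i :: nat and xs :: "nat list"
  defines "A \<equiv> asum \<alpha> (nbrs Ed (insert i (set xs)))" and "B \<equiv> asum \<alpha> (insert i (set xs))"
  assumes i: "i \<notin> set xs" and nonneg: "\<And>x. x \<in> insert i (set xs) \<Longrightarrow> 0 \<le> \<alpha> x" and BA: "B < A"
    and weights_nonneg: "\<And>w. first_occurrences w = xs \<Longrightarrow> 0 \<le> pweight Ed \<alpha> w"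
    and T_sum: "(pweight Ed \<alpha> has_sum T) {w. first_occurrences w = xs}"
    and E_sum: "((\<lambda>w. real (length w) * pweight Ed \<alpha> w) has_sum E) {w. first_occurrences w = xs}"
  shows "(pweight Ed \<alpha> has_sum T * (\<alpha> i / (A - B))) {w. first_occurrences w = xs @ [i]}"
    and "((\<lambda>w. real (length w) * pweight Ed \<alpha> w) has_sum (E + T * (A / (A - B))) * (\<alpha> i / (A - B)))
           {w. first_occurrences w = xs @ [i]}"
proof -
  \<comment> \<open>Every such word is uniquely p @ i # u, and all letters of i # u see the neighbourhood of
    insert i (set xs), so the weight factorises over the pair (p, u).\<close>
  define S where "S = insert i (set xs)"
  define P where "P = {p. first_occurrences p = xs} \<times> lists S"
  define g where "g u = prod_list (map (\<lambda>x. \<alpha> x / A) (i # u))" for u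
  have fibre: "{w. first_occurrences w = xs @ [i]} = (\<lambda>(p, u). p @ i # u) ` P"
    unfolding P_def S_def using first_occurrences_snoc_fibre[OF i] .
  have inj: "inj_on (\<lambda>(p, u). p @ i # u) P"
    by (rule inj_on_subset[OF inj_on_append_Cons]) (use i in \<open>auto simp: P_def\<close>)
  have weight: "pweight Ed \<alpha> (p @ i # u) = pweight Ed \<alpha> p * g u" if "(p, u) \<in> P" for p u
  proof -
    have "set p = set xs" "set u \<subseteq> insert i (set p)"
      using that by (auto simp: P_def S_def)
    then show ?thesis
      using pweight_append_Cons[of u i p Ed \<alpha>] by (simp add: g_def A_def)
  qed
  have "sum \<alpha> S < A" "finite S"
    using BA by (simp_all add: S_def B_def asum_def)
  note tail = has_sum_prod_list_Cons_lists[OF \<open>finite S\<close> nonneg[folded S_def] this(1), of i, folded g_def]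
    has_sum_length_prod_list_Cons_lists[OF \<open>finite S\<close> nonneg[folded S_def] this(1), of i, folded g_def]
  have g_nonneg: "0 \<le> g u" if "u \<in> lists S" for u
    unfolding g_def using that nonneg \<open>sum \<alpha> S < A\<close> sum_nonneg[of S \<alpha>]
    by (intro prod_list_nonneg) (auto simp: S_def)
  have "((\<lambda>(p, u). pweight Ed \<alpha> p * g u) has_sum T * (\<alpha> i / (A - B))) P"
    unfolding P_def B_def asum_def S_def[symmetric]
    by (rule has_sum_product_nonneg[OF T_sum tail(1)]) (simp_all add: weights_nonneg g_nonneg)
  then show "(pweight Ed \<alpha> has_sum T * (\<alpha> i / (A - B))) {w. first_occurrences w = xs @ [i]}"
    unfolding fibre has_sum_reindex[OF inj]
    by (rule has_sum_cong[THEN iffD1, rotated]) (auto simp: weight)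
  have "((\<lambda>(p, u). real (length p) * pweight Ed \<alpha> p * g u) has_sum E * (\<alpha> i / (A - B))) P"
    unfolding P_def B_def asum_def S_def[symmetric]
    by (rule has_sum_product_nonneg[OF E_sum tail(1)]) (simp_all add: weights_nonneg g_nonneg)
  moreover have "((\<lambda>(p, u). pweight Ed \<alpha> p * (real (length (i # u)) * g u))
      has_sum T * (\<alpha> i * A / (A - B)^2)) P"
    unfolding P_def B_def asum_def S_def[symmetric]
    by (rule has_sum_product_nonneg[OF T_sum tail(2)]) (simp_all add: weights_nonneg g_nonneg)
  ultimately have "((\<lambda>(p, u). real (length (p @ i # u)) * pweight Ed \<alpha> (p @ i # u))
      has_sum E * (\<alpha> i / (A - B)) + T * (\<alpha> i * A / (A - B)^2)) P"
    by (rule has_sum_cong[THEN iffD1, rotated, OF has_sum_add]) (auto simp: weight algebra_simps)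
  moreover have "E * (\<alpha> i / (A - B)) + T * (\<alpha> i * A / (A - B)^2) = (E + T * (A / (A - B))) * (\<alpha> i / (A - B))"
    by (simp add: algebra_simps power2_eq_square)
  ultimately show "((\<lambda>w. real (length w) * pweight Ed \<alpha> w) has_sum (E + T * (A / (A - B))) * (\<alpha> i / (A - B)))
           {w. first_occurrences w = xs @ [i]}"
    unfolding fibre has_sum_reindex[OF inj] by (simp add: o_def case_prod_unfold)
qed

lemma has_sum_pweight_first_occurrences:
  fixes Ed :: "nat \<Rightarrow> nat \<Rightarrow> bool" and \<alpha> :: "nat \<Rightarrow> real"
  assumes "distinct xs" and pos: "\<And>x. x \<in> set xs \<Longrightarrow> 0 < \<alpha> x"
    and stable: "\<And>T. T \<subseteq> set xs \<Longrightarrow> T \<noteq> {} \<Longrightarrow> asum \<alpha> T < asum \<alpha> (nbrs Ed T)"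
  shows "(pweight Ed \<alpha> has_sum T_ord Ed \<alpha> xs) {w. first_occurrences w = xs}
       \<and> ((\<lambda>w. real (length w) * pweight Ed \<alpha> w) has_sum E_ord Ed \<alpha> xs) {w. first_occurrences w = xs}"
  using assms
proof (induction xs rule: rev_induct)
  case Nil
  then show ?case
    by (auto simp: T_ord_def E_ord_def pweight_def intro!: has_sum_finiteI)
next
  case (snoc i xs)
  have nbrs_nonneg: "0 \<le> asum \<alpha> (nbrs Ed T)" if "T \<subseteq> set (xs @ [i])" "T \<noteq> {}" for T
  proof -
    have "0 \<le> asum \<alpha> T"
      unfolding asum_def using that snoc.prems(2) by (intro sum_nonneg) (auto intro: less_imp_le)
    with snoc.prems(3)[OF that] show ?thesis by simp
  qed
  have IH: "(pweight Ed \<alpha> has_sum T_ord Ed \<alpha> xs) {w. first_occurrences w = xs}"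
    "((\<lambda>w. real (length w) * pweight Ed \<alpha> w) has_sum E_ord Ed \<alpha> xs) {w. first_occurrences w = xs}"
    using snoc.prems by (auto intro!: snoc.IH[THEN conjunct1] snoc.IH[THEN conjunct2])
  have "0 \<le> pweight Ed \<alpha> w" if "first_occurrences w = xs" for w
  proof (rule pweight_nonneg)
    have "set w = set xs"
      using that by auto
    then show "0 \<le> \<alpha> x" if "x \<in> set w" for x
      using that snoc.prems(2) by (simp add: less_imp_le)
    show "0 \<le> asum \<alpha> (nbrs Ed T)" if "T \<subseteq> set w" "T \<noteq> {}" for T
      using that \<open>set w = set xs\<close> by (intro nbrs_nonneg) auto
  qed
  moreover have "asum \<alpha> (insert i (set xs)) < asum \<alpha> (nbrs Ed (insert i (set xs)))"
    using snoc.prems(3)[of "insert i (set xs)"] by simp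
  moreover have "i \<notin> set xs" "\<And>x. x \<in> insert i (set xs) \<Longrightarrow> 0 \<le> \<alpha> x"
    using snoc.prems(1,2) by (auto intro: less_imp_le)
  ultimately show ?case
    unfolding T_ord_snoc E_ord_snoc using has_sum_first_occurrences_snoc[OF _ _ _ _ IH] by blast
qed

lemma has_sum_states_by_first_occurrences:
  fixes f :: "nat list \<Rightarrow> real"
  assumes "finite V"
    and "\<And>I xs. I \<in> indep_sets V Ed \<Longrightarrow> xs \<in> permutations_of_set I \<Longrightarrow>
           (f has_sum F xs) {w. first_occurrences w = xs}"
  shows "(f has_sum f [] + (\<Sum>I\<in>indep_sets V Ed. \<Sum>xs\<in>permutations_of_set I. F xs)) (states V Ed)"
proof -
  let ?block = "\<lambda>I. \<Union>xs\<in>permutations_of_set I. {w. first_occurrences w = xs}"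
  have fin: "finite (indep_sets V Ed)"
    by (rule finite_subset[of _ "Pow V"]) (use assms(1) in \<open>auto simp: indep_sets_def\<close>)
  have blocks: "(f has_sum (\<Sum>xs\<in>permutations_of_set I. F xs)) (?block I)" if "I \<in> indep_sets V Ed" for I
    by (rule sum_has_sum) (use assms(2)[OF that] in auto)
  have disjoint: "?block I \<inter> ?block I' = {}"
    if "I \<in> indep_sets V Ed" "I' \<in> indep_sets V Ed" "I \<noteq> I'" for I I'
    using that(3) by (auto simp: permutations_of_set_def)
  have "(f has_sum (\<Sum>I\<in>indep_sets V Ed. \<Sum>xs\<in>permutations_of_set I. F xs))
      (\<Union>I\<in>indep_sets V Ed. ?block I)"
    by (rule sum_has_sum[OF fin blocks disjoint])
  moreover have "[] \<notin> (\<Union>I\<in>indep_sets V Ed. ?block I)"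
    by (auto simp: indep_sets_def permutations_of_set_def)
  moreover have "states V Ed = insert [] (\<Union>I\<in>indep_sets V Ed. ?block I)"
    by (auto simp: states_def indep_sets_def permutations_of_set_def distinct_first_occurrences)
  ultimately show ?thesis
    using has_sum_insert by metis
qed

lemma has_sum_pweight_independent_ordering:
  fixes Ed :: "nat \<Rightarrow> nat \<Rightarrow> bool" and \<alpha> :: "nat \<Rightarrow> real"
  assumes pos: "\<forall>i\<in>V. 0 < \<alpha> i"
    and stab: "\<forall>I\<in>indep_sets V Ed. asum \<alpha> I < asum \<alpha> (nbrs Ed I)"
    and I: "I \<in> indep_sets V Ed" and xs: "xs \<in> permutations_of_set I"
  shows "(pweight Ed \<alpha> has_sum T_ord Ed \<alpha> xs) {w. first_occurrences w = xs}
       \<and> ((\<lambda>w. real (length w) * pweight Ed \<alpha> w) has_sum E_ord Ed \<alpha> xs) {w. first_occurrences w = xs}"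
proof (rule has_sum_pweight_first_occurrences)
  show "distinct xs"
    using xs by (simp add: permutations_of_set_def)
  show "0 < \<alpha> x" if "x \<in> set xs" for x
    using that I xs pos by (auto simp: indep_sets_def permutations_of_set_def)
  show "asum \<alpha> T < asum \<alpha> (nbrs Ed T)" if "T \<subseteq> set xs" "T \<noteq> {}" for T
  proof -
    have "T \<in> indep_sets V Ed"
      using that I xs by (auto simp: indep_sets_def permutations_of_set_def)
    then show ?thesis
      using stab by blast
  qed
qed

theorem mainTheorem5:
  fixes n :: nat and Ed :: "nat \<Rightarrow> nat \<Rightarrow> bool" and \<alpha> :: "nat \<Rightarrow> real"
  assumes graph: "simple_graph_on {1..n} Ed"
    and conn: "graph_connected {1..n} Ed"
    and pos: "\<forall>i\<in>{1..n}. \<alpha> i > 0"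
    and distr: "(\<Sum>i\<in>{1..n}. \<alpha> i) = 1"
    and stab: "\<forall>I\<in>indep_sets {1..n} Ed. asum \<alpha> I < asum \<alpha> (nbrs Ed I)"
  shows "((\<lambda>w. real (length w) * stat_pi {1..n} Ed \<alpha> w) has_sum
           (inverse (1 + (\<Sum>I\<in>indep_sets {1..n} Ed. T_set Ed \<alpha> I)) *
            (\<Sum>I\<in>indep_sets {1..n} Ed. E_set Ed \<alpha> I)))
         (states {1..n} Ed)"
proof -
  let ?Ind = "indep_sets {1..n} Ed"
  note blocks = has_sum_pweight_independent_ordering[OF pos stab]
  have Z: "(pweight Ed \<alpha> has_sum 1 + (\<Sum>I\<in>?Ind. T_set Ed \<alpha> I)) (states {1..n} Ed)"
    using has_sum_states_by_first_occurrences[OF _ blocks[THEN conjunct1]]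
    by (simp add: T_set_def pweight_def)
  have L: "((\<lambda>w. real (length w) * pweight Ed \<alpha> w) has_sum (\<Sum>I\<in>?Ind. E_set Ed \<alpha> I)) (states {1..n} Ed)"
    using has_sum_states_by_first_occurrences[OF _ blocks[THEN conjunct2]] by (simp add: E_set_def)
  show ?thesis
    unfolding stat_pi_def infsumI[OF Z]
    using has_sum_cmult_right[OF L, of "inverse (1 + (\<Sum>I\<in>?Ind. T_set Ed \<alpha> I))"]
    by (simp add: mult.left_commute)
qed

end
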